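(* Let $R>0$ and $f$ be as defined below. For all $d\ge0$ and $r\ge R$, $$f(d,r)\le f_\sqcap(d,r):=\frac2R\mathbb{1}_{[d-R,d+R]}(r),$$ $$f(d,r)\ge f_\wedge(d,r):=\frac{2(R-d+r)}{\pi R^2}\mathbb{1}_{(d-R,d)}(r)+\frac{2(d+R-r)}{\pi R^2}\mathbb{1}_{[d,d+R)}(r).$$
   Context: For $d\ge0$, $r\ge0$: $f(d,r)=2r/R^2$ if $r\le R-d$; $f(d,r)=0$ if $r>R+d$ or $r<d-R$; and $f(d,r)=\frac{2r}{\pi R^2}\arccos\big(\frac{d^2+r^2-R^2}{2dr}\big)$ otherwise. (This is the $r$-derivative of $|B_r(0)\cap B_R(\mathbf{y})|/(\pi R^2)$ with $|\mathbf{y}|=d$.) *)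

theory Defs
  imports Complex_Main
begin

definition f :: "real \<Rightarrow> real \<Rightarrow> real \<Rightarrow> real" where
  "f R d r =
     (if r \<le> R - d then 2 * r / R^2
      else if r > R + d \<or> r < d - R then 0
      else 2 * r / (pi * R^2) * arccos ((d^2 + r^2 - R^2) / (2 * d * r)))"

definition indic_set :: "real set \<Rightarrow> real \<Rightarrow> real" where
  "indic_set A x = (if x \<in> A then 1 else 0)"

definition f_box :: "real \<Rightarrow> real \<Rightarrow> real \<Rightarrow> real" where
  "f_box R d r = 2 / R * indic_set {d - R .. d + R} r"

definition f_wedge :: "real \<Rightarrow> real \<Rightarrow> real \<Rightarrow> real" where
  "f_wedge R d r = 2 * (R - d + r) / (pi * R^2) * indic_set {d - R <..< d} r
                 + 2 * (d + R - r) / (pi * R^2) * indic_set {d ..< d + R} r"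

end

theory Submission
  imports Defs "HOL-Analysis.Complex_Transcendental"
begin

text \<open>In the arccos regime the relevant angle is \<open>\<theta> = arccos x\<close>, where \<open>x\<close> is the cosine of the
  angle at the origin in the triangle with sides \<open>d\<close>, \<open>r\<close>, \<open>R\<close>, and \<open>f = 2 r \<theta> / (\<pi> R\<^sup>2)\<close>.
  The upper bound is the arc length estimate \<open>r \<theta> \<le> 3 r sin \<theta> \<le> 3 R \<le> \<pi> R\<close>, using that
  \<open>r sin \<theta>\<close> is a height of the triangle and \<open>\<theta> \<le> \<pi>/2\<close> because \<open>r \<ge> R\<close>.
  The lower bound follows from \<open>\<theta>\<^sup>2 \<ge> 2 (1 - cos \<theta>)\<close> and the law of cosines, which give
  \<open>(r \<theta>)\<^sup>2 \<ge> r (R\<^sup>2 - (r - d)\<^sup>2) / d \<ge> (R - \<bar>r - d\<bar>)\<^sup>2\<close>.\<close>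

lemma sin_ge_third:
  fixes t :: real
  assumes "0 \<le> t" "t \<le> pi/2"
  shows "t / 3 \<le> sin t"
proof -
  have "\<bar>sin t - (\<Sum>m<3. sin_coeff m * t ^ m)\<bar> \<le> inverse (fact 3) * \<bar>t\<bar> ^ 3"
    by (rule Maclaurin_sin_bound)
  moreover have "(\<Sum>m<3. sin_coeff m * t ^ m) = t"
    by (simp add: eval_nat_numeral sin_coeff_def)
  ultimately have "\<bar>sin t - t\<bar> \<le> t^3/6"
    using assms by (simp add: fact_numeral)
  hence taylor: "t - t^3/6 \<le> sin t" unfolding abs_le_iff by linarith
  have "t \<le> 2" using assms pi_less_4 by linarith
  hence "t^2 \<le> 2^2" using assms by (intro power_mono) auto
  hence "t^3 \<le> 4 * t" using assms by (simp add: power3_eq_cube power2_eq_square mult_right_mono)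
  with taylor show ?thesis by linarith
qed

lemma arccos_le_3_sqrt:
  fixes x :: real
  assumes "0 \<le> x" "x \<le> 1"
  shows "arccos x \<le> 3 * sqrt (1 - x^2)"
proof -
  have "0 \<le> arccos x" "arccos x \<le> pi/2"
    using arccos_bounded[of x] arccos_le_pi2[of x] assms by auto
  hence "arccos x / 3 \<le> sin (arccos x)" by (rule sin_ge_third)
  thus ?thesis using sin_arccos[of x] assms by simp
qed

lemma arccos_power2_ge:
  fixes x :: real
  assumes "-1 \<le> x" "x \<le> 1"
  shows "2 * (1 - x) \<le> (arccos x)^2"
proof -
  let ?t = "arccos x"
  have "x = 1 - 2 * (sin (?t/2))^2"
    using cos_double_sin[of "?t/2"] assms by simp
  moreover have "(sin (?t/2))^2 \<le> (?t/2)^2"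
    using abs_sin_x_le_abs_x[of "?t/2"] by (metis power2_abs abs_ge_zero power_mono)
  ultimately show ?thesis by (simp add: power_divide)
qed

definition tri_cos :: "real \<Rightarrow> real \<Rightarrow> real \<Rightarrow> real" where
  "tri_cos R d r = (d^2 + r^2 - R^2) / (2 * d * r)"

lemma tri_cos_bounds:
  fixes R d r :: real
  assumes "d > 0" "R \<le> r" "\<bar>r - d\<bar> \<le> R"
  shows "0 \<le> tri_cos R d r" "tri_cos R d r \<le> 1"
proof -
  have "0 \<le> R" using assms(3) by linarith
  hence "R^2 \<le> r^2" using assms by (intro power_mono) auto
  thus "0 \<le> tri_cos R d r"
    unfolding tri_cos_def using assms by (intro divide_nonneg_pos) (auto intro: add_increasing)
  have "(r - d)^2 \<le> R^2" using assms by (simp add: power2_le_iff_abs_le)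
  hence "d^2 + r^2 - R^2 \<le> 2 * d * r" by (simp add: power2_eq_square algebra_simps)
  thus "tri_cos R d r \<le> 1" unfolding tri_cos_def using assms by simp
qed

lemma tri_height_le:
  fixes R d r :: real
  assumes "d > 0" "r > 0"
  shows "r^2 * (1 - (tri_cos R d r)^2) \<le> R^2"
proof -
  have "(2*d*r)^2 * (r^2 * (1 - (tri_cos R d r)^2)) = r^2 * ((2*d*r)^2 - (d^2 + r^2 - R^2)^2)"
    unfolding tri_cos_def using assms by (simp add: field_simps power2_eq_square)
  also have "\<dots> = r^2 * (4 * d^2 * R^2 - (r^2 - R^2 - d^2)^2)"
    by (simp add: power2_eq_square algebra_simps)
  also have "\<dots> \<le> r^2 * (4 * d^2 * R^2)"
    by (intro mult_left_mono) auto
  also have "\<dots> = (2*d*r)^2 * R^2"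
    by (simp add: power2_eq_square)
  finally show ?thesis using assms by simp
qed

lemma tri_one_minus_cos:
  fixes R d r :: real
  assumes "d > 0" "r > 0"
  shows "r * (R^2 - (r - d)^2) / d = r^2 * (2 * (1 - tri_cos R d r))"
  unfolding tri_cos_def using assms by (simp add: field_simps power2_eq_square)

lemma arc_le_pi_radius:
  fixes R d r :: real
  assumes "d > 0" "0 < R" "R \<le> r" "\<bar>r - d\<bar> \<le> R"
  shows "r * arccos (tri_cos R d r) \<le> pi * R"
proof -
  let ?x = "tri_cos R d r"
  have "r * sqrt (1 - ?x^2) = sqrt (r^2 * (1 - ?x^2))"
    using assms by (simp add: real_sqrt_mult)
  also have "\<dots> \<le> R"
    using real_sqrt_le_mono[OF tri_height_le[of d r R]] assms by simp
  finally have "r * sqrt (1 - ?x^2) \<le> R" .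
  moreover have "r * arccos ?x \<le> r * (3 * sqrt (1 - ?x^2))"
    using arccos_le_3_sqrt tri_cos_bounds[OF assms(1,3,4)] assms
    by (intro mult_left_mono) auto
  moreover have "3 * R \<le> pi * R" using pi_gt3 assms by simp
  ultimately show ?thesis by linarith
qed

lemma wedge_square_le:
  fixes R d r :: real
  assumes "d > 0" "R \<le> r" "\<bar>r - d\<bar> \<le> R"
  shows "d * (R - \<bar>r - d\<bar>)^2 \<le> r * (R^2 - (r - d)^2)"
proof -
  define s where "s = \<bar>r - d\<bar>"
  have s: "0 \<le> s" "s \<le> R" "(r - d)^2 = s^2" using assms by (auto simp: s_def)
  have "d * (R - s) \<le> r * (R + s)"
  proof (cases "d \<le> r")
    case True
    have "d * (R - s) \<le> d * R" using assms s by (intro mult_left_mono) auto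
    also have "\<dots> \<le> r * R" using True s by (intro mult_right_mono) auto
    also have "\<dots> \<le> r * (R + s)" using assms s by (intro mult_left_mono) auto
    finally show ?thesis .
  next
    case False
    hence "(d - r) * R \<le> (d - r) * (d + r)" using assms by (intro mult_left_mono) auto
    thus ?thesis using False by (simp add: s_def algebra_simps)
  qed
  hence "d * (R - s) * (R - s) \<le> r * (R + s) * (R - s)"
    using s by (intro mult_right_mono) auto
  thus ?thesis unfolding s(3) s_def[symmetric] by (simp add: power2_eq_square algebra_simps)
qed

lemma arc_ge_wedge:
  fixes R d r :: real
  assumes "d > 0" "0 < R" "R \<le> r" "\<bar>r - d\<bar> \<le> R"
  shows "R - \<bar>r - d\<bar> \<le> r * arccos (tri_cos R d r)"
proof -
  let ?x = "tri_cos R d r"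
  have bounds: "0 \<le> ?x" "?x \<le> 1"
    using tri_cos_bounds[OF assms(1,3,4)] by simp_all
  have "(R - \<bar>r - d\<bar>)^2 * d \<le> r * (R^2 - (r - d)^2)"
    using wedge_square_le[OF assms(1,3,4)] by (metis mult.commute)
  hence "(R - \<bar>r - d\<bar>)^2 \<le> r * (R^2 - (r - d)^2) / d"
    using pos_le_divide_eq[OF assms(1)] by blast
  also have "\<dots> = r^2 * (2 * (1 - ?x))"
    using assms by (intro tri_one_minus_cos) auto
  also have "\<dots> \<le> r^2 * (arccos ?x)^2"
    using bounds by (intro mult_left_mono arccos_power2_ge) auto
  also have "\<dots> = (r * arccos ?x)^2"
    by (simp add: power_mult_distrib)
  finally have "(R - \<bar>r - d\<bar>)^2 \<le> (r * arccos ?x)^2" .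
  moreover have "0 \<le> r * arccos ?x"
    using assms bounds arccos_lbound[of ?x] by simp
  ultimately show ?thesis by (rule power2_le_imp_le)
qed

lemma f_box_eq: "f_box R d r = (if \<bar>r - d\<bar> \<le> R then 2 / R else 0)"
  by (auto simp: f_box_def indic_set_def)

lemma f_wedge_eq: "f_wedge R d r = 2 * max 0 (R - \<bar>r - d\<bar>) / (pi * R^2)"
proof (cases "r < d")
  case True
  hence "R - \<bar>r - d\<bar> = R - d + r" by simp
  thus ?thesis using True
    by (simp add: f_wedge_def indic_set_def max_def diff_divide_distrib add_divide_distrib)
next
  case False
  hence "R - \<bar>r - d\<bar> = d + R - r" by simp
  thus ?thesis using False by (simp add: f_wedge_def indic_set_def max_def)
qed

theorem lemma4p8:
  fixes R d r :: real
  assumes "R > 0" and "d \<ge> 0" and "r \<ge> R"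
  shows "f R d r \<le> f_box R d r \<and> f R d r \<ge> f_wedge R d r"
proof -
  have box_nonneg: "0 \<le> f_box R d r" using assms by (simp add: f_box_eq)
  consider (centred) "r \<le> R - d" | (disjoint) "R - d < r" "R < \<bar>r - d\<bar>"
    | (overlap) "R - d < r" "\<bar>r - d\<bar> \<le> R" by linarith
  thus ?thesis
  proof cases
    case centred
    hence "d = 0" "r = R" using assms by auto
    hence "f R d r = 2 / R" "f_box R d r = 2 / R" "f_wedge R d r = 0"
      using assms by (simp_all add: f_def f_box_eq f_wedge_eq power2_eq_square)
    thus ?thesis using assms by simp
  next
    case disjoint
    hence "f R d r = 0" "f_wedge R d r = 0"
      by (auto simp: f_def f_wedge_eq)
    thus ?thesis using box_nonneg by simp
  next
    case overlap
    hence "d > 0" using assms by linarith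
    have f_arc: "f R d r = 2 * (r * arccos (tri_cos R d r)) / (pi * R^2)"
      using overlap by (auto simp: f_def tri_cos_def abs_le_iff)
    have "f R d r \<le> 2 * (pi * R) / (pi * R^2)"
      unfolding f_arc using arc_le_pi_radius[OF \<open>d > 0\<close>] overlap assms
      by (intro divide_right_mono) auto
    also have "\<dots> = f_box R d r"
      using assms overlap by (simp add: f_box_eq power2_eq_square)
    finally have upper: "f R d r \<le> f_box R d r" .
    have "max 0 (R - \<bar>r - d\<bar>) \<le> r * arccos (tri_cos R d r)"
      using arc_ge_wedge[OF \<open>d > 0\<close> \<open>R > 0\<close> \<open>r \<ge> R\<close>] overlap by simp
    hence "f_wedge R d r \<le> f R d r"
      unfolding f_arc f_wedge_eq by (intro divide_right_mono) auto
    with upper show ?thesis by simp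
  qed
qed

end
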